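(* Let $L$ be a semilattice. Let $X_L=\{P\in\mathrm{Ind}(L)\mid \bigcap_{T\in\mathrm{Ind}(L),\,T\supsetneq P}T\supsetneq P\}$, and for $l\in L$ let $\mathrm{Supp}(l)=\{P\in X_L\mid l\notin P\}$, where $X_L$ carries the coarsest topology in which all $\mathrm{Supp}(l)$ are closed. Then $X_L$ with this map $\mathrm{Supp}$ is the universal support datum of $L$: for every support datum $Y$ of $L$ there exists a unique map of support data $X_L\to Y$.
   Context: A semilattice is a partially ordered set in which any two elements have a supremum; a map of semilattices preserves finite suprema. For a semilattice $L$, an ind-object is a non-empty subset $T\subset L$ closed under suprema of two elements and downward closed; $\mathrm{Ind}(L)$ is the set of ind-objects ordered by inclusion. Any semilattice map $f\colon L\to L'$ into a semilattice $L'$ in which every non-empty subset has a supremum extends uniquely to $\tilde f\colon \mathrm{Ind}(L)\to L'$ preserving arbitrary suprema. For a set $X$, $2^X$ is ordered by inclusion. A support datum of $L$ is a $T_0$ topological space $X$ with a semilattice map $\mathrm{Supp}\colon L\to 2^X$ such that (1) the induced map $\mathrm{Ind}(L)\to 2^X$ is injective, and (2) the topology of $X$ is the coarsest in which all $\mathrm{Supp}(l)$, $l\in L$, are closed. A map of support data $X\to Y$ is a continuous map $f$ with $\mathrm{Supp}_X(l)=f^{-1}(\mathrm{Supp}_Y(l))$ for all $l\in L$. *)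

theory Defs
  imports "HOL-Analysis.Analysis"
begin

text \<open>A semilattice L is modelled as a type of class semilattice_sup (a partial order
 in which any two elements have a supremum, written sup).\<close>

definition ind_object :: "'a::semilattice_sup set \<Rightarrow> bool" where
  "ind_object T \<longleftrightarrow> T \<noteq> {} \<and> (\<forall>a\<in>T. \<forall>b\<in>T. sup a b \<in> T) \<and> (\<forall>a\<in>T. \<forall>b. b \<le> a \<longrightarrow> b \<in> T)"

definition Ind :: "'a::semilattice_sup set set" where
  "Ind = {T. ind_object T}"

definition semilattice_map_pow :: "('a::semilattice_sup \<Rightarrow> 'b set) \<Rightarrow> bool" where
  "semilattice_map_pow S \<longleftrightarrow> (\<forall>a b. S (sup a b) = S a \<union> S b)"

text \<open>The unique extension Ind(L) -> 2^X preserving arbitrary suprema: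
  T is the supremum of the principal ideals of its elements, so it is sent to the union.\<close>
definition ind_ext :: "('a::semilattice_sup \<Rightarrow> 'b set) \<Rightarrow> 'a set \<Rightarrow> 'b set" where
  "ind_ext S T = (\<Union>l\<in>T. S l)"

definition coarsest_with_closed :: "'b topology \<Rightarrow> ('a \<Rightarrow> 'b set) \<Rightarrow> bool" where
  "coarsest_with_closed X S \<longleftrightarrow>
     (\<forall>l. closedin X (S l)) \<and>
     (\<forall>X'. topspace X' = topspace X \<and> (\<forall>l. closedin X' (S l)) \<longrightarrow> (\<forall>U. openin X U \<longrightarrow> openin X' U))"

definition support_datum :: "'b topology \<Rightarrow> ('a::semilattice_sup \<Rightarrow> 'b set) \<Rightarrow> bool" where
  "support_datum X S \<longleftrightarrow>
     t0_space X \<and> semilattice_map_pow S \<and> (\<forall>l. S l \<subseteq> topspace X) \<and>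
     inj_on (ind_ext S) Ind \<and> coarsest_with_closed X S"

definition support_map ::
  "'b topology \<Rightarrow> ('a::semilattice_sup \<Rightarrow> 'b set) \<Rightarrow> 'c topology \<Rightarrow> ('a \<Rightarrow> 'c set) \<Rightarrow> ('b \<Rightarrow> 'c) \<Rightarrow> bool" where
  "support_map X SX Y SY f \<longleftrightarrow>
     continuous_map X Y f \<and> (\<forall>l. SX l = {x \<in> topspace X. f x \<in> SY l})"

definition XL :: "'a::semilattice_sup set set" where
  "XL = {P \<in> Ind. P \<subset> \<Inter>{T \<in> Ind. P \<subset> T}}"

definition SuppL :: "'a::semilattice_sup \<Rightarrow> 'a set set" where
  "SuppL l = {P \<in> XL. l \<notin> P}"

text \<open>Topology generated by the complements of the SuppL l (and XL itself as the whole space):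
  the coarsest topology on XL in which all SuppL l are closed.\<close>
definition XL_top :: "'a::semilattice_sup set topology" where
  "XL_top = topology_generated_by (insert XL {XL - SuppL l | l. True})"

end

theory Submission
  imports Defs
begin

text \<open>
  A point of \<open>X\<^sub>L\<close> is an ind-object \<open>P\<close> with a least ind-object \<open>Q\<close> strictly above it.
  Given a support datum \<open>Y\<close>, injectivity of \<open>Ind(L) \<rightarrow> 2\<^sup>Y\<close> provides a point \<open>y\<close> in the
  support of \<open>Q\<close> but not of \<open>P\<close>; the ind-object \<open>{l. y \<notin> Supp l}\<close> contains \<open>P\<close> but not \<open>Q\<close>,
  hence equals \<open>P\<close>. Since the topology of \<open>Y\<close> is generated by the supports and is \<open>T\<^sub>0\<close>,
  such a point is unique, and every map of support data must send \<open>P\<close> to it.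
  Conversely, \<open>X\<^sub>L\<close> is a support datum: by Zorn, an ind-object \<open>T\<close> avoiding \<open>l\<close> extends to
  an ind-object maximal among those avoiding \<open>l\<close>, which lies in \<open>X\<^sub>L\<close>; so points of \<open>X\<^sub>L\<close>
  separate ind-objects.
\<close>

definition topology_closed_generated :: "'b set \<Rightarrow> ('a \<Rightarrow> 'b set) \<Rightarrow> 'b topology" where
  "topology_closed_generated A S = topology_generated_by (insert A {A - S l | l. True})"

lemma topspace_topology_closed_generated [simp]:
  "topspace (topology_closed_generated A S) = A"
  unfolding topology_closed_generated_def by auto

lemma closedin_topology_closed_generated:
  assumes "S l \<subseteq> A"
  shows "closedin (topology_closed_generated A S) (S l)"
  unfolding closedin_def using assms
  by (auto simp: topology_closed_generated_def intro!: topology_generated_by_Basis)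

lemma openin_topology_closed_generated_imp:
  assumes "\<And>l. closedin X (S l)" and "openin (topology_closed_generated (topspace X) S) U"
  shows "openin X U"
proof (rule generate_topology_on_coarsest)
  show "generate_topology_on (insert (topspace X) {topspace X - S l | l. True}) U"
    using assms(2) by (simp add: topology_closed_generated_def openin_topology_generated_by_iff)
qed (use assms(1) in auto)

lemma coarsest_with_closed_iff:
  assumes "\<And>l. S l \<subseteq> topspace X"
  shows "coarsest_with_closed X S \<longleftrightarrow> X = topology_closed_generated (topspace X) S"
proof
  assume coarsest: "coarsest_with_closed X S"
  show "X = topology_closed_generated (topspace X) S"
    unfolding topology_eq
  proof (intro allI iffI)
    fix U assume "openin X U"
    then show "openin (topology_closed_generated (topspace X) S) U"
      using coarsest assms closedin_topology_closed_generated
      unfolding coarsest_with_closed_def by (metis topspace_topology_closed_generated)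
  next
    fix U assume "openin (topology_closed_generated (topspace X) S) U"
    then show "openin X U"
      using coarsest openin_topology_closed_generated_imp
      unfolding coarsest_with_closed_def by blast
  qed
next
  assume X: "X = topology_closed_generated (topspace X) S"
  show "coarsest_with_closed X S"
    unfolding coarsest_with_closed_def
    using X assms closedin_topology_closed_generated openin_topology_closed_generated_imp
    by metis
qed

lemma continuous_map_into_topology_closed_generated:
  assumes "f \<in> topspace X \<rightarrow> A" and "\<And>l. closedin X {x \<in> topspace X. f x \<in> S l}"
  shows "continuous_map X (topology_closed_generated A S) f"
  unfolding topology_closed_generated_def continuous_on_generated_topo_iff
proof (intro conjI allI impI)
  fix U assume "U \<in> insert A {A - S l | l. True}"
  then consider "U = A" | l where "U = A - S l" by blast
  then show "openin X (f -` U \<inter> topspace X)"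
  proof cases
    case 1
    then have "f -` U \<inter> topspace X = topspace X" using assms(1) by auto
    then show ?thesis by simp
  next
    case (2 l)
    then have "f -` U \<inter> topspace X = topspace X - {x \<in> topspace X. f x \<in> S l}"
      using assms(1) by auto
    then show ?thesis using assms(2) by (simp add: openin_diff)
  qed
qed (use assms(1) in auto)

lemma topology_closed_generated_indistinguishable:
  assumes "openin (topology_closed_generated A S) U" and "y \<in> A" "y' \<in> A"
    and "\<And>l. y \<in> S l \<longleftrightarrow> y' \<in> S l"
  shows "y \<in> U \<longleftrightarrow> y' \<in> U"
proof (rule generate_topology_on_coarsest[where T = "\<lambda>U. y \<in> U \<longleftrightarrow> y' \<in> U"])
  show "istopology (\<lambda>U. y \<in> U \<longleftrightarrow> y' \<in> U)"
    unfolding istopology_def by blast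
  show "generate_topology_on (insert A {A - S l | l. True}) U"
    using assms(1) by (simp add: topology_closed_generated_def openin_topology_generated_by_iff)
qed (use assms(2-4) in auto)

lemma support_datumD:
  assumes "support_datum Y S"
  shows "t0_space Y" "semilattice_map_pow S" "S l \<subseteq> topspace Y" "inj_on (ind_ext S) Ind"
    "coarsest_with_closed Y S"
  using assms by (simp_all add: support_datum_def)

lemma support_datum_eq_topology_closed_generated:
  assumes "support_datum Y S"
  shows "Y = topology_closed_generated (topspace Y) S"
  using coarsest_with_closed_iff[of S Y] support_datumD(3,5)[OF assms] by blast

lemma support_datum_point_eqI:
  assumes sd: "support_datum Y S" and "y \<in> topspace Y" "y' \<in> topspace Y"
    and same_supports: "\<And>l. y \<in> S l \<longleftrightarrow> y' \<in> S l"
  shows "y = y'"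
proof (rule ccontr)
  assume "y \<noteq> y'"
  then obtain U where U: "openin Y U" "y \<notin> U \<longleftrightarrow> y' \<in> U"
    using support_datumD(1)[OF sd] assms(2,3) unfolding t0_space_def by blast
  have "y \<in> U \<longleftrightarrow> y' \<in> U"
    using topology_closed_generated_indistinguishable[of "topspace Y" S U y y'] same_supports U(1)
      support_datum_eq_topology_closed_generated[OF sd] assms(2,3) by simp
  with U(2) show False by blast
qed

lemma ind_object_nonempty: "ind_object T \<Longrightarrow> T \<noteq> {}"
  by (simp add: ind_object_def)

lemma ind_object_sup_closed:
  "ind_object T \<Longrightarrow> a \<in> T \<Longrightarrow> b \<in> T \<Longrightarrow> sup a b \<in> T"
  by (simp add: ind_object_def)

lemma ind_object_down_closed:
  "ind_object T \<Longrightarrow> a \<in> T \<Longrightarrow> b \<le> a \<Longrightarrow> b \<in> T"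
  by (simp add: ind_object_def)

lemma ind_object_sup_iff:
  "ind_object P \<Longrightarrow> sup a b \<in> P \<longleftrightarrow> a \<in> P \<and> b \<in> P"
  by (meson ind_object_down_closed ind_object_sup_closed sup_ge1 sup_ge2)

lemma semilattice_map_pow_mono:
  assumes "semilattice_map_pow S" and "a \<le> b"
  shows "S a \<subseteq> S b"
proof -
  have "S b = S a \<union> S b"
    using assms unfolding semilattice_map_pow_def by (metis sup_absorb2)
  then show ?thesis by blast
qed

lemma ind_object_not_supported_at:
  assumes "semilattice_map_pow S" and "y \<notin> S a"
  shows "ind_object {l. y \<notin> S l}"
  unfolding ind_object_def[of "{l. y \<notin> S l}"]
proof (intro conjI ballI allI impI)
  show "{l. y \<notin> S l} \<noteq> {}" using assms(2) by blast
  show "sup a b \<in> {l. y \<notin> S l}" if "a \<in> {l. y \<notin> S l}" "b \<in> {l. y \<notin> S l}" for a b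
    using assms(1) that by (simp add: semilattice_map_pow_def)
  show "b \<in> {l. y \<notin> S l}" if "a \<in> {l. y \<notin> S l}" "b \<le> a" for a b
    using semilattice_map_pow_mono[OF assms(1) \<open>b \<le> a\<close>] that(1) by blast
qed

lemma ind_object_Inter:
  assumes "\<And>T. T \<in> \<T> \<Longrightarrow> ind_object T" and "\<Inter>\<T> \<noteq> {}"
  shows "ind_object (\<Inter>\<T>)"
  unfolding ind_object_def[of "\<Inter>\<T>"]
  using assms(2) ind_object_sup_closed[OF assms(1)] ind_object_down_closed[OF assms(1)] by blast

lemma Union_chain_in_Ind:
  assumes "\<C> \<noteq> {}" and "subset.chain Ind \<C>"
  shows "\<Union>\<C> \<in> Ind"
proof -
  have ideals: "\<And>T. T \<in> \<C> \<Longrightarrow> ind_object T" and chain: "\<forall>S\<in>\<C>. \<forall>T\<in>\<C>. S \<subseteq> T \<or> T \<subseteq> S"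
    using assms(2) by (auto simp: subset_chain_def Ind_def)
  have "\<Union>\<C> \<noteq> {}" using assms(1) ideals ind_object_nonempty by blast
  moreover have "sup a b \<in> \<Union>\<C>" if a: "a \<in> \<Union>\<C>" and b: "b \<in> \<Union>\<C>" for a b
  proof -
    obtain S T where "S \<in> \<C>" "T \<in> \<C>" "a \<in> S" "b \<in> T" using a b by blast
    moreover from this have "S \<subseteq> T \<or> T \<subseteq> S" using chain by blast
    ultimately obtain W where "W \<in> \<C>" "a \<in> W" "b \<in> W" by blast
    then show ?thesis using ideals ind_object_sup_closed by blast
  qed
  moreover have "b \<in> \<Union>\<C>" if "a \<in> \<Union>\<C>" "b \<le> a" for a b
    using that ideals ind_object_down_closed by blast
  ultimately show ?thesis unfolding Ind_def ind_object_def by blast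
qed

lemma XL_cover:
  assumes "P \<in> XL"
  obtains Q where "Q \<in> Ind" "P \<subset> Q" "\<And>T. T \<in> Ind \<Longrightarrow> P \<subset> T \<Longrightarrow> Q \<subseteq> T"
proof
  let ?Q = "\<Inter>{T \<in> Ind. P \<subset> T}"
  have P: "P \<in> Ind" "P \<subset> ?Q" using assms by (simp_all add: XL_def)
  then have "?Q \<noteq> {}" using ind_object_nonempty[of P] by (auto simp: Ind_def)
  then have "ind_object ?Q" by (intro ind_object_Inter) (simp add: Ind_def)
  then show "?Q \<in> Ind" by (simp add: Ind_def)
  show "P \<subset> ?Q" by (fact P(2))
  show "?Q \<subseteq> T" if "T \<in> Ind" "P \<subset> T" for T
    using that by (intro Inter_lower) simp
qed

lemma in_XL_if_maximal_avoiding: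
  assumes "P \<in> Ind" "l \<notin> P" and "\<And>T. T \<in> Ind \<Longrightarrow> P \<subset> T \<Longrightarrow> l \<in> T"
  shows "P \<in> XL"
proof -
  have "P \<subseteq> \<Inter>{T \<in> Ind. P \<subset> T}" by blast
  moreover have "l \<in> \<Inter>{T \<in> Ind. P \<subset> T}" using assms(3) by blast
  ultimately have "P \<subset> \<Inter>{T \<in> Ind. P \<subset> T}" using assms(2) by blast
  with assms(1) show ?thesis by (simp add: XL_def)
qed

lemma XL_extension_avoiding:
  assumes "T \<in> Ind" "l \<notin> T"
  shows "\<exists>P\<in>XL. T \<subseteq> P \<and> l \<notin> P"
proof -
  let ?A = "{P \<in> Ind. T \<subseteq> P \<and> l \<notin> P}"
  have "\<exists>P\<in>?A. \<forall>P'\<in>?A. P \<subseteq> P' \<longrightarrow> P' = P"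
  proof (rule subset_Zorn_nonempty)
    show "?A \<noteq> {}" using assms by blast
    fix \<C> assume \<C>: "\<C> \<noteq> {}" "subset.chain ?A \<C>"
    then have "\<C> \<subseteq> ?A" "subset.chain Ind \<C>"
      by (auto simp: subset_chain_def)
    with \<C>(1) have "\<Union>\<C> \<in> Ind" "T \<subseteq> \<Union>\<C>" "l \<notin> \<Union>\<C>"
      using Union_chain_in_Ind by blast+
    then show "\<Union>\<C> \<in> ?A" by simp
  qed
  then obtain P where "P \<in> ?A" and maximal: "\<forall>P'\<in>?A. P \<subseteq> P' \<longrightarrow> P' = P" ..
  then have P: "P \<in> Ind" "T \<subseteq> P" "l \<notin> P" by simp_all
  have "l \<in> P'" if "P' \<in> Ind" "P \<subset> P'" for P'
  proof (rule ccontr)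
    assume "l \<notin> P'"
    with that P(2) have "P' \<in> ?A" by auto
    with maximal that(2) show False by auto
  qed
  with P have "P \<in> XL" by (intro in_XL_if_maximal_avoiding)
  with P show ?thesis by blast
qed

lemma XL_top_eq: "XL_top = topology_closed_generated XL SuppL"
  unfolding XL_top_def topology_closed_generated_def ..

lemma topspace_XL_top [simp]: "topspace XL_top = XL"
  by (simp add: XL_top_eq)

lemma SuppL_subset_XL: "SuppL l \<subseteq> XL"
  unfolding SuppL_def by blast

lemma closedin_SuppL: "closedin XL_top (SuppL l)"
  unfolding XL_top_eq by (rule closedin_topology_closed_generated) (rule SuppL_subset_XL)

lemma t0_space_XL_top: "t0_space XL_top"
  unfolding t0_space_def topspace_XL_top
proof (intro ballI impI)
  fix P Q assume "P \<in> XL" "Q \<in> XL" "P \<noteq> Q"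
  then obtain l where "P \<in> SuppL l \<longleftrightarrow> Q \<notin> SuppL l"
    unfolding SuppL_def by blast
  moreover have "openin XL_top (XL - SuppL l)"
    using closedin_SuppL by (metis closedin_def topspace_XL_top)
  ultimately show "\<exists>U. openin XL_top U \<and> (P \<notin> U \<longleftrightarrow> Q \<in> U)"
    using \<open>P \<in> XL\<close> \<open>Q \<in> XL\<close> by blast
qed

lemma semilattice_map_pow_SuppL: "semilattice_map_pow SuppL"
  unfolding semilattice_map_pow_def SuppL_def
  using ind_object_sup_iff by (auto simp: XL_def Ind_def)

lemma inj_on_ind_ext_SuppL: "inj_on (ind_ext SuppL) Ind"
proof (rule inj_onI)
  have separated: "ind_ext SuppL T \<noteq> ind_ext SuppL T'"
    if "T' \<in> Ind" "l \<in> T" "l \<notin> T'" for T T' l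
  proof -
    obtain P where "P \<in> XL" "T' \<subseteq> P" "l \<notin> P"
      using XL_extension_avoiding \<open>T' \<in> Ind\<close> \<open>l \<notin> T'\<close> by blast
    then have "P \<in> ind_ext SuppL T" "P \<notin> ind_ext SuppL T'"
      using \<open>l \<in> T\<close> unfolding ind_ext_def SuppL_def by blast+
    then show ?thesis by blast
  qed
  fix T T' assume "T \<in> Ind" "T' \<in> Ind" and eq: "ind_ext SuppL T = ind_ext SuppL T'"
  show "T = T'"
  proof (rule set_eqI)
    fix l show "l \<in> T \<longleftrightarrow> l \<in> T'"
      using separated[of T' l T] separated[of T l T'] \<open>T \<in> Ind\<close> \<open>T' \<in> Ind\<close> eq by argo
  qed
qed

lemma coarsest_with_closed_XL_top: "coarsest_with_closed XL_top SuppL"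
  by (subst coarsest_with_closed_iff) (simp_all add: SuppL_subset_XL XL_top_eq)

lemma support_datum_XL_top: "support_datum XL_top SuppL"
  unfolding support_datum_def topspace_XL_top
  by (intro conjI allI t0_space_XL_top semilattice_map_pow_SuppL SuppL_subset_XL
      inj_on_ind_ext_SuppL coarsest_with_closed_XL_top)

lemma support_datum_point_exists:
  assumes sd: "support_datum Y S" and "P \<in> XL"
  shows "\<exists>y\<in>topspace Y. \<forall>l. y \<in> S l \<longleftrightarrow> l \<notin> P"
proof -
  obtain Q where Q: "Q \<in> Ind" "P \<subset> Q" and least: "\<And>T. T \<in> Ind \<Longrightarrow> P \<subset> T \<Longrightarrow> Q \<subseteq> T"
    using XL_cover[OF \<open>P \<in> XL\<close>] by blast
  have P: "P \<in> Ind" using \<open>P \<in> XL\<close> by (simp add: XL_def)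
  have "ind_ext S P \<noteq> ind_ext S Q"
    using inj_onD[OF support_datumD(4)[OF sd] _ P Q(1)] Q(2) by blast
  moreover have "ind_ext S P \<subseteq> ind_ext S Q" using Q(2) by (auto simp: ind_ext_def)
  ultimately obtain y where "y \<in> ind_ext S Q" and y_outside: "y \<notin> ind_ext S P" by blast
  then obtain l\<^sub>0 where "l\<^sub>0 \<in> Q" "y \<in> S l\<^sub>0" by (auto simp: ind_ext_def)
  then have y: "y \<in> topspace Y" using support_datumD(3)[OF sd] by blast
  let ?I = "{l. y \<notin> S l}"
  have "P \<subseteq> ?I" using y_outside by (auto simp: ind_ext_def)
  obtain a where "a \<in> P" using P ind_object_nonempty by (auto simp: Ind_def)
  with \<open>P \<subseteq> ?I\<close> have "ind_object ?I"
    by (intro ind_object_not_supported_at[OF support_datumD(2)[OF sd]]) blast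
  moreover have "\<not> Q \<subseteq> ?I" using \<open>l\<^sub>0 \<in> Q\<close> \<open>y \<in> S l\<^sub>0\<close> by blast
  ultimately have "\<not> P \<subset> ?I" using least by (auto simp: Ind_def)
  with \<open>P \<subseteq> ?I\<close> have "?I = P" by blast
  with y show ?thesis by blast
qed

lemma support_map_XL_iff:
  assumes sd: "support_datum Y S"
  shows "support_map XL_top SuppL Y S f \<longleftrightarrow>
    (\<forall>P\<in>XL. f P \<in> topspace Y \<and> (\<forall>l. f P \<in> S l \<longleftrightarrow> l \<notin> P))"
proof
  assume "support_map XL_top SuppL Y S f"
  then show "\<forall>P\<in>XL. f P \<in> topspace Y \<and> (\<forall>l. f P \<in> S l \<longleftrightarrow> l \<notin> P)"
    unfolding support_map_def continuous_map_def SuppL_def by (auto simp: set_eq_iff)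
next
  assume f: "\<forall>P\<in>XL. f P \<in> topspace Y \<and> (\<forall>l. f P \<in> S l \<longleftrightarrow> l \<notin> P)"
  then have preimage: "{P \<in> topspace XL_top. f P \<in> S l} = SuppL l" for l
    unfolding SuppL_def by auto
  have "continuous_map XL_top (topology_closed_generated (topspace Y) S) f"
    by (rule continuous_map_into_topology_closed_generated) (use f preimage closedin_SuppL in auto)
  then have "continuous_map XL_top Y f"
    using support_datum_eq_topology_closed_generated[OF sd] by simp
  with preimage show "support_map XL_top SuppL Y S f"
    unfolding support_map_def by simp
qed

theorem mainTheorem2:
  shows "support_datum (XL_top :: 'a::semilattice_sup set topology) SuppL \<and>
    (\<forall>(Y :: 'b topology) (S :: 'a \<Rightarrow> 'b set). support_datum Y S \<longrightarrow>
       (\<exists>f. support_map XL_top SuppL Y S f \<and>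
          (\<forall>g. support_map XL_top SuppL Y S g \<longrightarrow> (\<forall>P\<in>topspace XL_top. g P = f P))))"
proof (intro conjI allI impI support_datum_XL_top)
  fix Y :: "'b topology" and S :: "'a \<Rightarrow> 'b set"
  assume sd: "support_datum Y S"
  define f where "f P = (SOME y. y \<in> topspace Y \<and> (\<forall>l. y \<in> S l \<longleftrightarrow> l \<notin> P))" for P :: "'a set"
  have f_point: "f P \<in> topspace Y \<and> (\<forall>l. f P \<in> S l \<longleftrightarrow> l \<notin> P)" if "P \<in> XL" for P
    unfolding f_def by (rule someI_ex) (use support_datum_point_exists[OF sd that] in blast)
  then have f: "support_map XL_top SuppL Y S f"
    using support_map_XL_iff[OF sd] by blast
  have "g P = f P" if "support_map XL_top SuppL Y S g" "P \<in> XL" for g P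
  proof (rule support_datum_point_eqI[OF sd])
    have "g P \<in> topspace Y \<and> (\<forall>l. g P \<in> S l \<longleftrightarrow> l \<notin> P)"
      using that support_map_XL_iff[OF sd] by blast
    with f_point[OF \<open>P \<in> XL\<close>]
    show "g P \<in> topspace Y" "f P \<in> topspace Y" "g P \<in> S l \<longleftrightarrow> f P \<in> S l" for l
      by simp_all
  qed
  with f show "\<exists>f. support_map XL_top SuppL Y S f \<and>
      (\<forall>g. support_map XL_top SuppL Y S g \<longrightarrow> (\<forall>P\<in>topspace XL_top. g P = f P))"
    by auto
qed

end
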